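(* Let $W$ be a finite set and $\mathtt{N}=\{N_1,\ldots,N_r\}$ a sequence of subsets of $W$ with $N_1\cup\cdots\cup N_r=W$, and put $m=|W|+r$. Put $M_i=N_i-(N_1\cup\cdots\cup N_{i-1})$, $\mathtt{M}=\{M_1,\ldots,M_r\}$, and $U=\widetilde{M}_2\cup\cdots\cup\widetilde{M}_r$. If $\widetilde{N}_i\cap\widetilde{N}_j\ne\emptyset$ for all $i,j$, then the inclusion $\mathbb{R}\mathcal{Z}_{K(\mathtt{M})_U}\to\mathbb{R}\mathcal{Z}_{K(\mathtt{N})}^{m-1}$ is null homotopic.
   Context: Choose distinct points $a_1,\ldots,a_r\notin W$, $\widetilde{N}_i=N_i\sqcup\{a_i\}$, $\widetilde{M}_i=M_i\sqcup\{a_i\}$, $V=W\sqcup\{a_1,\ldots,a_r\}$ (so $|V|=m$). $K(\mathtt{N})$ (resp. $K(\mathtt{M})$) is the simplicial complex on $V$ whose minimal non-faces are exactly $\widetilde{N}_1,\ldots,\widetilde{N}_r$ (resp. $\widetilde{M}_1,\ldots,\widetilde{M}_r$); since $M_i\subset N_i$, $K(\mathtt{M})\subset K(\mathtt{N})$. $K(\mathtt{M})_U=\{\sigma\in K(\mathtt{M})\mid\sigma\subset U\}$ on vertex set $U$. For a complex $K$ on vertex set $V$, $\mathbb{R}\mathcal{Z}_K=\bigcup_{\sigma\in K}\prod_{v\in V}Y_v$ with $Y_v=CS^0$ (reduced cone, an interval) if $v\in\sigma$ and $Y_v=S^0$ otherwise; its fat wedge filtration is $\mathbb{R}\mathcal{Z}_K^i=\{(x_v)\in\mathbb{R}\mathcal{Z}_K\mid\text{at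 least }|V|-i\text{ coordinates are the basepoint}\}$. The inclusion $\mathbb{R}\mathcal{Z}_{K(\mathtt{M})_U}\to\mathbb{R}\mathcal{Z}_{K(\mathtt{N})}^{m-1}$ puts the basepoint in every coordinate outside $U$. *)

theory Defs
  imports "HOL-Analysis.Analysis"
begin

text \<open>Simplicial complex on vertex set V whose minimal non-faces are the members of F
  (F an antichain of nonempty subsets of V): faces are the subsets of V containing no member of F.\<close>
definition complex_min_nonfaces :: "'a set \<Rightarrow> 'a set set \<Rightarrow> 'a set set" where
  "complex_min_nonfaces V F = {\<sigma>. \<sigma> \<subseteq> V \<and> (\<forall>\<tau>\<in>F. \<not> \<tau> \<subseteq> \<sigma>)}"

definition full_sub :: "'a set set \<Rightarrow> 'a set \<Rightarrow> 'a set set" where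
  "full_sub K U = {\<sigma>\<in>K. \<sigma> \<subseteq> U}"

text \<open>Real moment-angle complex on vertex set V: CS^0 is modelled as [-1,1],
  S^0 as {-1,1}, basepoint 1.  Points are extensional functions V \<rightarrow> real.\<close>
definition RZ :: "'a set \<Rightarrow> 'a set set \<Rightarrow> ('a \<Rightarrow> real) set" where
  "RZ V K = (\<Union>\<sigma>\<in>K. PiE V (\<lambda>v. if v \<in> \<sigma> then {-1..1} else {-1,1}))"

definition RZ_fat :: "'a set \<Rightarrow> 'a set set \<Rightarrow> nat \<Rightarrow> ('a \<Rightarrow> real) set" where
  "RZ_fat V K i = {x \<in> RZ V K. card V - i \<le> card {v\<in>V. x v = 1}}"

definition RZ_top :: "'a set \<Rightarrow> ('a \<Rightarrow> real) set \<Rightarrow> ('a \<Rightarrow> real) topology" where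
  "RZ_top V S = subtopology (product_topology (\<lambda>_. euclideanreal) V) S"

definition incl_base :: "'a set \<Rightarrow> 'a set \<Rightarrow> ('a \<Rightarrow> real) \<Rightarrow> ('a \<Rightarrow> real)" where
  "incl_base U V x = restrict (\<lambda>v. if v \<in> U then x v else 1) V"

definition null_homotopic :: "'a topology \<Rightarrow> 'b topology \<Rightarrow> ('a \<Rightarrow> 'b) \<Rightarrow> bool" where
  "null_homotopic X Y f \<longleftrightarrow> (\<exists>c. homotopic_with (\<lambda>_. True) X Y f (\<lambda>_. c))"

end

theory Submission
  imports Defs
begin

text \<open>Every \<open>N\<^sub>i \<union> {a\<^sub>i}\<close> meets \<open>N\<^sub>1 \<union> {a\<^sub>1}\<close>, which is disjoint from \<open>U\<close>; so no minimal
  non-face of \<open>K(N)\<close> lies in \<open>U\<close>, i.e. \<open>U\<close> itself is a face of \<open>K(N)\<close>. Hence the whole cube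
  \<open>[-1,1]\<^sup>U\<close> (basepoint outside \<open>U\<close>) lies in \<open>RZ(K(N))\<close>, and the straight-line homotopy pushing
  every \<open>U\<close>-coordinate to the basepoint contracts the inclusion. It stays in the fat wedge
  filtration stage \<open>m - 1\<close> because the coordinate \<open>a\<^sub>1 \<notin> U\<close> remains the basepoint.\<close>

definition contract_to_basepoint :: "'a set \<Rightarrow> 'a set \<Rightarrow> real \<Rightarrow> ('a \<Rightarrow> real) \<Rightarrow> 'a \<Rightarrow> real" where
  "contract_to_basepoint U V t x = restrict (\<lambda>v. if v \<in> U then (1 - t) * x v + t else 1) V"

lemma continuous_map_contract_to_basepoint:
  assumes "\<And>t x. t \<in> {0..1} \<Longrightarrow> x \<in> S \<Longrightarrow> contract_to_basepoint U V t x \<in> T"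
  shows "continuous_map (prod_topology (top_of_set {0..1}) (RZ_top U S)) (RZ_top V T)
           (\<lambda>(t, x). contract_to_basepoint U V t x)"
  unfolding RZ_top_def
proof (rule continuous_map_into_subtopology)
  let ?X = "prod_topology (top_of_set {0..1::real}) (subtopology (product_topology (\<lambda>_. euclideanreal) U) S)"
  have coord: "continuous_map ?X euclideanreal (\<lambda>p. snd p v)" if "v \<in> U" for v
    using continuous_map_compose[OF continuous_map_snd
        continuous_map_from_subtopology[OF continuous_map_product_projection[OF that]]]
    by (simp add: o_def)
  have time: "continuous_map ?X euclideanreal fst"
    by (rule continuous_map_into_fulltopology[OF continuous_map_fst])
  show "continuous_map ?X (product_topology (\<lambda>_. euclideanreal) V) (\<lambda>(t, x). contract_to_basepoint U V t x)"
    unfolding continuous_map_componentwise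
  proof (intro conjI ballI)
    fix v assume "v \<in> V"
    show "continuous_map ?X euclideanreal (\<lambda>p. (case p of (t, x) \<Rightarrow> contract_to_basepoint U V t x) v)"
    proof (cases "v \<in> U")
      case True
      have "continuous_map ?X euclideanreal (\<lambda>p. (1 - fst p) * snd p v + fst p)"
        by (intro continuous_intros coord True time)
      then show ?thesis
        using True \<open>v \<in> V\<close> by (simp add: case_prod_beta contract_to_basepoint_def)
    qed (use \<open>v \<in> V\<close> in \<open>simp add: case_prod_beta contract_to_basepoint_def\<close>)
  qed (auto simp: contract_to_basepoint_def)
qed (use assms in auto)

lemma null_homotopic_incl_base:
  assumes "\<And>t x. t \<in> {0..1} \<Longrightarrow> x \<in> S \<Longrightarrow> contract_to_basepoint U V t x \<in> T"
  shows "null_homotopic (RZ_top U S) (RZ_top V T) (incl_base U V)"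
  unfolding null_homotopic_def homotopic_with_def
proof (intro exI[where x = "restrict (\<lambda>_. 1) V"] exI conjI)
  show "continuous_map (prod_topology (top_of_set {0..1}) (RZ_top U S)) (RZ_top V T)
          (\<lambda>(t, x). contract_to_basepoint U V t x)"
    by (rule continuous_map_contract_to_basepoint[OF assms])
qed (auto simp: contract_to_basepoint_def incl_base_def)

lemma RZ_subset_cube: "RZ V K \<subseteq> PiE V (\<lambda>_. {-1..1})"
  unfolding RZ_def by (intro UN_least PiE_mono) auto

lemma contract_to_basepoint_in_RZ_fat:
  assumes "finite V" and "U \<subseteq> V" and "U \<in> K"
    and "card V - i \<le> card (V - U)"
    and t: "t \<in> {0..1}" and x: "x \<in> PiE U (\<lambda>_. {-1..1})"
  shows "contract_to_basepoint U V t x \<in> RZ_fat V K i"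
proof -
  let ?y = "contract_to_basepoint U V t x"
  have "(1 - t) * x v + t \<in> {-1..1}" if "v \<in> U" for v
  proof -
    have "-1 \<le> x v" "x v \<le> 1" using x that by auto
    then have "(1 - t) * -1 \<le> (1 - t) * x v" "(1 - t) * x v \<le> (1 - t) * 1"
      using t by (intro mult_left_mono; simp)+
    then show ?thesis using t by auto
  qed
  then have "?y \<in> PiE V (\<lambda>v. if v \<in> U then {-1..1} else {-1,1})"
    by (auto simp: PiE_iff contract_to_basepoint_def)
  then have "?y \<in> RZ V K"
    unfolding RZ_def using \<open>U \<in> K\<close> by blast
  moreover have "card (V - U) \<le> card {v\<in>V. ?y v = 1}"
    using \<open>finite V\<close> by (intro card_mono) (auto simp: contract_to_basepoint_def)
  ultimately show ?thesis
    using assms(4) unfolding RZ_fat_def by auto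
qed

lemma in_complex_min_nonfacesI:
  assumes "U \<subseteq> V" and "U \<inter> \<sigma> = {}" and "\<And>\<tau>. \<tau> \<in> F \<Longrightarrow> \<tau> \<inter> \<sigma> \<noteq> {}"
  shows "U \<in> complex_min_nonfaces V F"
  using assms unfolding complex_min_nonfaces_def by blast

lemma first_nonface_disjoint_from_later_parts:
  fixes r :: nat and a :: "nat \<Rightarrow> 'a"
  assumes "\<forall>i\<in>{1..r}. N i \<subseteq> W" and "inj_on a {1..r}" and "\<forall>i\<in>{1..r}. a i \<notin> W"
  shows "(\<Union>i\<in>{2..r}. insert (a i) (N i - (\<Union>j\<in>{1..<i}. N j))) \<inter> insert (a 1) (N 1) = {}"
proof -
  have "insert (a i) (N i - (\<Union>j\<in>{1..<i}. N j)) \<inter> insert (a 1) (N 1) = {}" if "i \<in> {2..r}" for i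
  proof -
    have "1 \<in> {1..r}" "i \<in> {1..r}" "1 \<in> {1..<i}" using that by auto
    then have "a i \<noteq> a 1" using assms(2) by (metis inj_onD not_less_iff_gr_or_eq atLeastLessThan_iff)
    then show ?thesis using assms(1,3) \<open>1 \<in> {1..r}\<close> \<open>i \<in> {1..r}\<close> \<open>1 \<in> {1..<i}\<close> by blast
  qed
  then show ?thesis by blast
qed

theorem proposition4p5:
  fixes W :: "'a set" and r :: nat and N :: "nat \<Rightarrow> 'a set" and a :: "nat \<Rightarrow> 'a"
  assumes "finite W"
    and "\<forall>i\<in>{1..r}. N i \<subseteq> W"
    and "(\<Union>i\<in>{1..r}. N i) = W"
    and "inj_on a {1..r}"
    and "\<forall>i\<in>{1..r}. a i \<notin> W"
    and "\<forall>i\<in>{1..r}. \<forall>j\<in>{1..r}. insert (a i) (N i) \<inter> insert (a j) (N j) \<noteq> {}"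
  shows "let V = W \<union> a ` {1..r};
             m = card W + r;
             M = (\<lambda>i. N i - (\<Union>j\<in>{1..<i}. N j));
             KN = complex_min_nonfaces V ((\<lambda>i. insert (a i) (N i)) ` {1..r});
             KM = complex_min_nonfaces V ((\<lambda>i. insert (a i) (M i)) ` {1..r});
             U = (\<Union>i\<in>{2..r}. insert (a i) (M i))
         in null_homotopic (RZ_top U (RZ U (full_sub KM U)))
                           (RZ_top V (RZ_fat V KN (m - 1)))
                           (incl_base U V)"
proof -
  define V where "V = W \<union> a ` {1..r}"
  define U where "U = (\<Union>i\<in>{2..r}. insert (a i) (N i - (\<Union>j\<in>{1..<i}. N j)))"
  define KN where "KN = complex_min_nonfaces V ((\<lambda>i. insert (a i) (N i)) ` {1..r})"
  have "finite V" using assms(1) by (simp add: V_def)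
  have "U \<subseteq> V" using assms(2) by (force simp: U_def V_def)
  have U_disjoint: "U \<inter> insert (a 1) (N 1) = {}"
    unfolding U_def using first_nonface_disjoint_from_later_parts[OF assms(2,4,5)] .
  have "U \<in> KN"
    unfolding KN_def using \<open>U \<subseteq> V\<close> U_disjoint
  proof (rule in_complex_min_nonfacesI)
    fix \<tau> assume "\<tau> \<in> (\<lambda>i. insert (a i) (N i)) ` {1..r}"
    then obtain i where "i \<in> {1..r}" "\<tau> = insert (a i) (N i)" by blast
    then show "\<tau> \<inter> insert (a 1) (N 1) \<noteq> {}"
      using assms(6) by auto
  qed
  have "card V - (card W + r - 1) \<le> card (V - U)"
  proof (cases "r = 0")
    case False
    then have "a 1 \<in> V - U" using U_disjoint by (auto simp: V_def)
    then have "1 \<le> card (V - U)"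
      using \<open>finite V\<close> by (auto simp: Suc_le_eq card_gt_0_iff)
    have "card V \<le> card W + card (a ` {1..r})"
      unfolding V_def by (rule card_Un_le)
    also have "\<dots> \<le> card W + r"
      using card_image_le[of "{1..r}" a] by simp
    finally show ?thesis using \<open>1 \<le> card (V - U)\<close> by linarith
  qed (use assms(3) in \<open>simp add: V_def\<close>)
  then show ?thesis
    unfolding Let_def V_def[symmetric] U_def[symmetric] KN_def[symmetric]
    using RZ_subset_cube
    by (intro null_homotopic_incl_base contract_to_basepoint_in_RZ_fat[OF \<open>finite V\<close> \<open>U \<subseteq> V\<close> \<open>U \<in> KN\<close>])
      (auto simp: full_sub_def)
qed

end
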